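(* Let $p/q$ be a reduced fraction with $q\ge1$. For any integer $0 \le N <q$ and any $x \in \mathbb{R}$, \[ P_N (p/q,x) \cdot P_{q-N-1} (p/q,-x) = \begin{cases} \frac{|\sin (\pi qx)|}{|\sin (\pi x)|} & \text{if } x \notin \mathbb{Z}, \\ q & \text{if } x \in \mathbb{Z} . \end{cases} \] In particular, for any $x \in \mathbb{R}$, $P_{q-1}(p/q,x)$ equals $\frac{|\sin (\pi qx)|}{|\sin (\pi x)|}$ if $x\notin\mathbb{Z}$ and $q$ if $x\in\mathbb{Z}$.
   Context: For real $\beta,x$ and integer $N\ge0$, $P_N(\beta,x)=\prod_{n=1}^N|2\sin(\pi(n\beta+x))|$ (empty product $=1$). *)

theory Defs
  imports Complex_Main
begin

definition P :: "nat \<Rightarrow> real \<Rightarrow> real \<Rightarrow> real" where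
  "P N \<beta> x = (\<Prod>n = 1..N. \<bar>2 * sin (pi * (real n * \<beta> + x))\<bar>)"

end

theory Submission
  imports
    Defs
    "HOL-Computational_Algebra.Fundamental_Theorem_Algebra"
    "HOL-Number_Theory.Modular_Inverse"
begin

text \<open>
  Write \<open>e(t) = cis (2 * pi * t)\<close>, \<open>\<beta> = p / q\<close> and \<open>w = e(x)\<close>. Since
  \<open>\<bar>2 * sin (pi * (n * \<beta> + x))\<bar> = \<bar>w - e(- n * \<beta>)\<bar>\<close> and \<open>e(- n * \<beta>) = e((q - n) * \<beta>)\<close>,
  the factors of \<open>P N \<beta> x\<close> are the distances from \<open>w\<close> to \<open>e(m * \<beta>)\<close> for
  \<open>q - N \<le> m < q\<close>, and those of \<open>P (q - N - 1) \<beta> (- x)\<close> are the distances for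
  \<open>1 \<le> m < q - N\<close>. As \<open>p\<close> is invertible modulo \<open>q\<close>, the points \<open>e(m * p / q)\<close>,
  \<open>1 \<le> m < q\<close>, are exactly the nontrivial \<open>q\<close>-th roots of unity \<open>\<zeta>\<close>, so the product is
  \<open>\<bar>\<Prod>\<zeta>. w - \<zeta>\<bar> = \<bar>1 + w + \<dots> + w ^ (q - 1)\<bar> = \<bar>w ^ q - 1\<bar> / \<bar>w - 1\<bar>\<close>.
\<close>

lemma norm_cis_diff: "cmod (cis s - cis t) = \<bar>2 * sin ((s - t) / 2)\<bar>"
proof -
  define a where "a = (s - t) / 2"
  have "cis s - cis t = cis ((s + t) / 2) * (cis a - cis (- a))"
    by (simp add: a_def right_diff_distrib cis_mult field_simps)
  moreover have "cis a - cis (- a) = complex_of_real (2 * sin a) * \<i>"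
    by (simp add: complex_eq_iff)
  ultimately show ?thesis
    by (simp add: norm_mult a_def)
qed

lemma cis_2pi_of_int_divide_cong:
  assumes "[k = l] (mod int q)"
  shows "cis (2 * pi * of_int k / real q) = cis (2 * pi * of_int l / real q)"
proof (cases "q = 0")
  case False
  obtain t where "k = l + int q * t"
    using assms by (metis cong_iff_lin cong_sym)
  then have "2 * pi * of_int k / real q = 2 * pi * of_int l / real q + 2 * pi * of_int t"
    using False by (simp add: field_simps)
  then show ?thesis
    by (simp flip: cis_mult)
qed simp

lemma poly_prod_roots_unity:
  assumes "q > 0"
  shows "(\<Prod>z | z ^ q = 1. [:- z, 1:]) = (monom 1 q - 1 :: complex poly)"
proof -
  define f :: "complex poly" where "f = monom 1 q - 1"
  have poly_f: "poly f z = z ^ q - 1" for z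
    by (simp add: f_def poly_monom)
  have "lead_coeff f = 1"
    using assms lead_coeff_add_le[of "- 1" "monom (1::complex) q"] by (simp add: f_def degree_monom_eq)
  moreover have "rsquarefree f"
    unfolding rsquarefree_roots
  proof (intro allI notI)
    fix z
    assume "poly f z = 0 \<and> poly (pderiv f) z = 0"
    then have "z ^ q = 1" and "of_nat q * z ^ (q - 1) = 0"
      by (simp_all add: poly_f f_def pderiv_diff pderiv_monom poly_monom)
    with assms show False by (simp add: power_0_left)
  qed
  ultimately have "(\<Prod>z | poly f z = 0. [:- z, 1:]) = f"
    using complex_poly_decompose_rsquarefree[of f] by simp
  then have "(\<Prod>z | z ^ q = 1. [:- z, 1:]) = f"
    by (simp only: poly_f right_minus_eq)
  then show ?thesis
    by (simp only: f_def)
qed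

lemma prod_nontrivial_roots_unity:
  assumes "q > 0"
  shows "(\<Prod>z \<in> {z. z ^ q = 1} - {1}. w - z) = (\<Sum>j<q. w ^ j :: complex)"
proof -
  have "[:-1, 1:] * (\<Prod>z \<in> {z::complex. z ^ q = 1} - {1}. [:-z, 1:]) = (\<Prod>z | z ^ q = 1. [:- z, 1:])"
    using assms by (intro prod.remove[symmetric] finite_roots_unity) auto
  also have "\<dots> = (monom 1 q - 1 :: complex poly)"
    by (rule poly_prod_roots_unity[OF assms])
  also have "\<dots> = [:-1, 1:] * (\<Sum>j<q. monom 1 j)"
    by (rule poly_eq_poly_eq_iff[THEN iffD1])
       (simp add: fun_eq_iff poly_monom poly_sum power_diff_1_eq algebra_simps)
  finally have "(\<Prod>z \<in> {z::complex. z ^ q = 1} - {1}. [:-z, 1:]) = (\<Sum>j<q. monom 1 j)"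
    using mult_left_cancel[of "[:-1, 1:] :: complex poly"] by simp
  from arg_cong[where f = "\<lambda>f. poly f w", OF this] show ?thesis
    by (simp add: poly_prod poly_sum poly_monom)
qed

lemma prod_cis_nontrivial_roots_unity:
  assumes "q > 0"
  shows "(\<Prod>k=1..<q. w - cis (2 * pi * real k / real q)) = (\<Sum>j<q. w ^ j)"
proof -
  have "bij_betw (\<lambda>k. cis (2 * pi * real k / real q)) ({..<q} - {0}) ({z. z ^ q = 1} - {1})"
    using assms by (intro bij_betw_DiffI bij_betw_roots_unity) auto
  moreover have "{..<q} - {0} = {1..<q}" by auto
  ultimately
  have "bij_betw (\<lambda>k. cis (2 * pi * real k / real q)) {1..<q} ({z. z ^ q = 1} - {1})"
    by simp
  from prod.reindex_bij_betw[OF this, of "\<lambda>z. w - z"] show ?thesis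
    using prod_nontrivial_roots_unity[OF assms] by simp
qed

lemma norm_sum_powers_cis:
  "cmod (\<Sum>j<q. cis (2 * pi * x) ^ j) =
     (if x \<notin> \<int> then \<bar>sin (pi * real q * x)\<bar> / \<bar>sin (pi * x)\<bar> else real q)"
proof (cases "x \<in> \<int>")
  case True
  then show ?thesis by simp
next
  case False
  define w where "w = cis (2 * pi * x)"
  have "w \<noteq> 1"
  proof
    assume "w = 1"
    then have "cos (2 * pi * x) = 1"
      unfolding w_def by (metis cis.sel(1) one_complex.sel(1))
    then obtain n :: int where "x = of_int n"
      by (auto simp: cos_one_2pi_int)
    with False show False by simp
  qed
  then have "cmod (\<Sum>j<q. w ^ j) = cmod (w ^ q - 1) / cmod (w - 1)"
    by (simp add: power_diff_1_eq norm_mult)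
  also have "w ^ q = cis (2 * pi * (real q * x))"
    by (simp add: w_def DeMoivre mult_ac)
  finally show ?thesis
    using False norm_cis_diff[of _ 0] by (simp add: w_def abs_mult mult_ac)
qed

lemma P_eq_prod_norm_cis_diff:
  shows "P N \<beta> x = (\<Prod>n=1..N. cmod (cis (2 * pi * x) - cis (- 2 * pi * real n * \<beta>)))"
    and "P N \<beta> (- x) = (\<Prod>n=1..N. cmod (cis (2 * pi * x) - cis (2 * pi * real n * \<beta>)))"
proof -
  have "(2 * pi * x - - 2 * pi * real n * \<beta>) / 2 = pi * (real n * \<beta> + x)"
    and "(2 * pi * x - 2 * pi * real n * \<beta>) / 2 = - (pi * (real n * \<beta> + - x))" for n
    by (simp_all add: field_simps)
  then show "P N \<beta> x = (\<Prod>n=1..N. cmod (cis (2 * pi * x) - cis (- 2 * pi * real n * \<beta>)))"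
    and "P N \<beta> (- x) = (\<Prod>n=1..N. cmod (cis (2 * pi * x) - cis (2 * pi * real n * \<beta>)))"
    unfolding P_def norm_cis_diff by (simp_all only: sin_minus abs_minus mult_minus_right)
qed

lemma P_mul_P_uminus_eq_norm_sum_powers_cis:
  fixes p :: int
  assumes "coprime p (int q)" and "N < q"
  shows "P N (of_int p / q) x * P (q - N - 1) (of_int p / q) (- x) =
           cmod (\<Sum>j<q. cis (2 * pi * x) ^ j)"
proof -
  define w where "w = cis (2 * pi * x)"
  define g where "g k = cmod (w - cis (2 * pi * of_int k / real q))" for k :: int
  have g_cong: "g k = g l" if "[k = l] (mod int q)" for k l
    unfolding g_def using cis_2pi_of_int_divide_cong[OF that] by simp
  have "P N (of_int p / q) x = (\<Prod>n=1..N. g (int (q - n) * p))"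
    unfolding P_eq_prod_norm_cis_diff(1)
  proof (intro prod.cong refl)
    fix n
    assume "n \<in> {1..N}"
    then have "[- (int n * p) = int (q - n) * p] (mod int q)"
      using assms(2) by (simp add: cong_iff_lin of_nat_diff algebra_simps)
    then have "g (- (int n * p)) = g (int (q - n) * p)"
      by (rule g_cong)
    then show "cmod (cis (2 * pi * x) - cis (- 2 * pi * real n * (of_int p / q))) = g (int (q - n) * p)"
      by (simp add: g_def w_def mult.assoc)
  qed
  also have "\<dots> = (\<Prod>m=q-N..<q. g (int m * p))"
    using assms(2) by (intro prod.reindex_bij_witness[of _ "\<lambda>m. q - m" "\<lambda>n. q - n"]) auto
  finally have P_left: "P N (of_int p / q) x = (\<Prod>m=q-N..<q. g (int m * p))" .
  have P_right: "P (q - N - 1) (of_int p / q) (- x) = (\<Prod>m=1..<q-N. g (int m * p))"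
    unfolding P_eq_prod_norm_cis_diff(2)
    by (intro prod.cong) (auto simp: g_def w_def mult.assoc)
  have "P N (of_int p / q) x * P (q - N - 1) (of_int p / q) (- x) =
          (\<Prod>m=1..<q-N. g (int m * p)) * (\<Prod>m=q-N..<q. g (int m * p))"
    unfolding P_left P_right by (rule mult.commute)
  also have "\<dots> = (\<Prod>m=1..<q. g (int m * p))"
    using assms(2) by (intro prod.atLeastLessThan_concat) auto
  also have "\<dots> = (\<Prod>m\<in>{1..<int q}. g (m * p))"
    using prod.atLeast_int_lessThan_int_shift[of "\<lambda>m. g (m * p)" 1 q] by simp
  also have "\<dots> = (\<Prod>m\<in>{1..<int q}. g (p * m mod int q))"
    by (intro prod.cong refl g_cong) (simp add: cong_def mult.commute)
  also have "\<dots> = (\<Prod>k\<in>{1..<int q}. g k)"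
    using bij_betw_int_remainders_mult[OF assms(1)] by (rule prod.reindex_bij_betw)
  also have "\<dots> = cmod (\<Prod>k=1..<q. w - cis (2 * pi * real k / real q))"
    using prod.atLeast_int_lessThan_int_shift[of g 1 q] by (simp add: g_def prod_norm)
  also have "\<dots> = cmod (\<Sum>j<q. w ^ j)"
    using assms(2) prod_cis_nontrivial_roots_unity[of q w] by simp
  finally show ?thesis
    unfolding w_def .
qed

theorem proposition1:
  fixes p :: int and q :: nat and N :: nat and x :: real
  assumes "q \<ge> 1" and "coprime p (int q)" and "N < q"
  shows "P N (real_of_int p / real q) x * P (q - N - 1) (real_of_int p / real q) (- x) =
           (if x \<notin> \<int> then \<bar>sin (pi * real q * x)\<bar> / \<bar>sin (pi * x)\<bar> else real q) \<and>
         P (q - 1) (real_of_int p / real q) x =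
           (if x \<notin> \<int> then \<bar>sin (pi * real q * x)\<bar> / \<bar>sin (pi * x)\<bar> else real q)"
proof -
  let ?\<beta> = "real_of_int p / real q"
  have "P N ?\<beta> x * P (q - N - 1) ?\<beta> (- x) = cmod (\<Sum>j<q. cis (2 * pi * x) ^ j)"
    using assms(2,3) by (rule P_mul_P_uminus_eq_norm_sum_powers_cis)
  moreover have "P (q - 1) ?\<beta> x * P 0 ?\<beta> (- x) = cmod (\<Sum>j<q. cis (2 * pi * x) ^ j)"
    using P_mul_P_uminus_eq_norm_sum_powers_cis[OF assms(2), of "q - 1" x] assms(1) by simp
  moreover have "P 0 ?\<beta> (- x) = 1"
    by (simp add: P_def)
  ultimately show ?thesis
    by (simp add: norm_sum_powers_cis)
qed

end
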